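(* Let $d\ge2$ and $k\ge0$ be integers, let $p_k=m_k+2d^k-1$, and let $W=W(D_{p_k,d};q)$. Then $[q^{2k}]W\le[q^{2k+1}]W=[q^{2k+2}]W$.
   Context: For a connected graph $G$, $W(G;q)=\sum_{\{u,v\}}q^{d(u,v)}$ over unordered pairs of distinct vertices, $d$ the graph distance; $[q^i]f$ is the coefficient of $q^i$ in $f$. The $d$-ary dendrimer $D_{n,d}$ is the tree on vertex set $\{1,\ldots,n\}$ defined inductively: $D_{1,d}$ is the single vertex $1$, and $D_{n,d}$ is obtained from $D_{n-1,d}$ by attaching a new leaf $n$ to the smallest-numbered vertex of $D_{n-1,d}$ having degree $\le d$. $m_k=3+2d\frac{d^k-1}{d-1}$. *)

theory Defs
  imports "HOL-Computational_Algebra.Polynomial"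
begin

text \<open>Graphs on vertex set {1..n}, edges as two-element sets of naturals.\<close>

definition vdeg :: "nat set set \<Rightarrow> nat \<Rightarrow> nat" where
  "vdeg E v = card {e \<in> E. v \<in> e}"

fun dend_edges :: "nat \<Rightarrow> nat \<Rightarrow> nat set set" where
  "dend_edges d 0 = {}"
| "dend_edges d (Suc 0) = {}"
| "dend_edges d (Suc (Suc n)) =
     (let E = dend_edges d (Suc n);
          v = (LEAST v. v \<in> {1..Suc n} \<and> vdeg E v \<le> d)
      in insert {v, Suc (Suc n)} E)"

definition is_walk :: "nat set set \<Rightarrow> nat list \<Rightarrow> bool" where
  "is_walk E xs \<longleftrightarrow> xs \<noteq> [] \<and> (\<forall>i. Suc i < length xs \<longrightarrow> {xs ! i, xs ! Suc i} \<in> E)"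

definition gdist :: "nat set set \<Rightarrow> nat \<Rightarrow> nat \<Rightarrow> nat" where
  "gdist E u v = (LEAST k. \<exists>xs. is_walk E xs \<and> length xs = Suc k \<and> hd xs = u \<and> last xs = v)"

definition wiener_poly :: "nat \<Rightarrow> nat set set \<Rightarrow> int poly" where
  "wiener_poly n E = (\<Sum>u\<in>{1..n}. \<Sum>v\<in>{u<..n}. monom 1 (gdist E u v))"

definition dendrimer_W :: "nat \<Rightarrow> nat \<Rightarrow> int poly" where
  "dendrimer_W n d = wiener_poly n (dend_edges d n)"

definition m_k :: "nat \<Rightarrow> nat \<Rightarrow> nat" where
  "m_k d k = 3 + 2 * d * ((d ^ k - 1) div (d - 1))"

end

(*
  Number the vertices of the dendrimer level by level: the root 1 has the d + 1 children
  2, ..., d + 2, and every later vertex u has the d children d(u - 1) + 3, ..., du + 2.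
  For p = p_k the levels 0, ..., k are complete and level k + 1 holds 3 d^k vertices, all in
  the subtrees of the first three children of the root.

  Two vertices in different subtrees of the root are at distance depth u + depth v; two
  distinct vertices in the same subtree are at distance at most depth u + depth v - 2, and at
  most depth u + depth v - 4 if they also share their ancestor at depth 2. As no depth exceeds
  k + 1, the pairs at distance 2k + 2 are the pairs of level-(k + 1) vertices in different
  subtrees, and the pairs at distance 2k + 1 join a vertex of level k + 1 to one of level k in
  another subtree: 3 d^(2k) pairs each. A pair at distance 2k lies on levels k + 1 and k - 1 or
  twice on level k in different subtrees, or twice on level k + 1 in one subtree but below
  different vertices of depth 2; there are at most (2d + 2) d^(2k - 1) \<le> 3 d^(2k) of these.
*)

theory Submission
  imports Defs
begin

section \<open>The tree of the parent map\<close>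

text \<open>The parent of a vertex v \<ge> 2 of the dendrimer, by dend_edges_eq_parent_edges;
  the values at 0 and 1 are junk.\<close>
definition parent :: "nat \<Rightarrow> nat \<Rightarrow> nat" where
  "parent d v = (v - 3) div d + 1"

lemma parent_less: "2 \<le> v \<Longrightarrow> parent d v < v"
  using div_le_dividend[of "v - 3" d] unfolding parent_def by linarith

lemma parent_pos [simp]: "0 < parent d v"
  by (simp add: parent_def)

lemma parent_le: "0 < v \<Longrightarrow> parent d v \<le> v"
  using div_le_dividend[of "v - 3" d] unfolding parent_def by linarith

lemma parent_mono: "x \<le> y \<Longrightarrow> parent d x \<le> parent d y"
  unfolding parent_def by (simp add: div_le_mono)

function depth :: "nat \<Rightarrow> nat \<Rightarrow> nat" where
  "depth d x = (if x \<le> 1 then 0 else Suc (depth d (parent d x)))"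
  by auto
termination
  by (relation "measure snd") (auto intro: parent_less)

declare depth.simps [simp del]

lemma depth_le_one [simp]: "x \<le> 1 \<Longrightarrow> depth d x = 0"
  by (simp add: depth.simps)

lemma depth_step: "2 \<le> x \<Longrightarrow> depth d x = Suc (depth d (parent d x))"
  by (simp add: depth.simps)

lemma depth_parent: "depth d (parent d x) = depth d x - 1"
  by (cases "x \<le> 1") (auto simp: depth_step parent_def)

lemma depth_eq_0_iff: "0 < x \<Longrightarrow> depth d x = 0 \<longleftrightarrow> x = 1"
  by (cases "x \<le> 1") (auto simp: depth_step)

lemma depth_mono: "x \<le> y \<Longrightarrow> depth d x \<le> depth d y"
proof (induction y arbitrary: x rule: less_induct)
  case (less y)
  show ?case
  proof (cases "x \<le> 1")
    case False
    have "depth d (parent d x) \<le> depth d (parent d y)"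
      using less parent_less[of y d] parent_mono[of x y d] False by simp
    with False less.prems show ?thesis
      by (simp add: depth_step)
  qed simp
qed

definition ancestor :: "nat \<Rightarrow> nat \<Rightarrow> nat \<Rightarrow> nat" where
  "ancestor d x t = (parent d ^^ (depth d x - t)) x"

lemma depth_funpow_parent: "depth d ((parent d ^^ n) x) = depth d x - n"
  by (induction n) (auto simp: depth_parent)

lemma funpow_parent_pos: "0 < x \<Longrightarrow> 0 < (parent d ^^ n) x"
  by (cases n) auto

lemma funpow_parent_le: "0 < x \<Longrightarrow> (parent d ^^ n) x \<le> x"
  by (induction n) (auto intro: order_trans[OF parent_le] funpow_parent_pos)

lemma ancestor_depth [simp]: "ancestor d x (depth d x) = x"
  by (simp add: ancestor_def)

lemma ancestor_pos: "0 < x \<Longrightarrow> 0 < ancestor d x t"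
  unfolding ancestor_def by (rule funpow_parent_pos)

lemma ancestor_le: "0 < x \<Longrightarrow> ancestor d x t \<le> x"
  unfolding ancestor_def by (rule funpow_parent_le)

lemma depth_ancestor: "t \<le> depth d x \<Longrightarrow> depth d (ancestor d x t) = t"
  by (simp add: ancestor_def depth_funpow_parent)

lemma ancestor_0: "0 < x \<Longrightarrow> ancestor d x 0 = 1"
  using depth_ancestor[of 0 d x] ancestor_pos[of x d 0] depth_eq_0_iff by auto

lemma ancestor_le_one [simp]: "x \<le> 1 \<Longrightarrow> ancestor d x t = x"
  by (simp add: ancestor_def)

lemma ancestor_parent:
  assumes "t < depth d x"
  shows "ancestor d (parent d x) t = ancestor d x t"
proof -
  have "depth d x - t = Suc (depth d (parent d x) - t)"
    using assms by (simp add: depth_parent)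
  then show ?thesis
    unfolding ancestor_def by (simp add: funpow_Suc_right del: funpow.simps)
qed

text \<open>Stepping up from the larger vertex always moves towards the other one, since every
  vertex is larger than its ancestors.\<close>
function tree_dist :: "nat \<Rightarrow> nat \<Rightarrow> nat \<Rightarrow> nat" where
  "tree_dist d u v = (if u = v \<or> u = 0 \<or> v = 0 then 0
     else if u < v then Suc (tree_dist d u (parent d v))
     else Suc (tree_dist d (parent d u) v))"
  by auto
termination
  by (relation "measure (\<lambda>(d, u, v). u + v)") (auto intro!: parent_less)

declare tree_dist.simps [simp del]

lemma tree_dist_self [simp]: "tree_dist d u u = 0"
  by (simp add: tree_dist.simps)

lemma tree_dist_less: "0 < u \<Longrightarrow> u < v \<Longrightarrow> tree_dist d u v = Suc (tree_dist d u (parent d v))"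
  by (subst tree_dist.simps) auto

lemma tree_dist_greater: "0 < v \<Longrightarrow> v < u \<Longrightarrow> tree_dist d u v = Suc (tree_dist d (parent d u) v)"
  by (subst tree_dist.simps) auto

lemma tree_dist_pos: "0 < u \<Longrightarrow> 0 < v \<Longrightarrow> u \<noteq> v \<Longrightarrow> 0 < tree_dist d u v"
  by (cases "u < v") (auto simp: tree_dist_less tree_dist_greater)

lemma tree_dist_sym: "tree_dist d u v = tree_dist d v u"
  by (induction d u v rule: tree_dist.induct) (subst (1 2) tree_dist.simps; auto)

lemma tree_dist_induct [consumes 2, case_names refl sym step]:
  assumes "0 < u" "0 < v"
    and refl: "\<And>u. P u u"
    and sym: "\<And>u v. 0 < u \<Longrightarrow> 0 < v \<Longrightarrow> P u v \<Longrightarrow> P v u"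
    and step: "\<And>u v. 0 < u \<Longrightarrow> u < v \<Longrightarrow> P u (parent d v) \<Longrightarrow> P u v"
  shows "P u v"
  using assms(1,2)
proof (induction "u + v" arbitrary: u v rule: less_induct)
  case (less u v)
  consider "u = v" | "u < v" | "v < u" by linarith
  then show ?case
  proof cases
    case 2
    with less have "P u (parent d v)"
      using parent_less[of v d] by simp
    from less.prems(1) 2 this show ?thesis by (rule step)
  next
    case 3
    with less have "P v (parent d u)"
      using parent_less[of u d] by simp
    from less.prems(2) 3 this have "P v u" by (rule step)
    from less.prems(2,1) this show ?thesis by (rule sym)
  qed (simp add: refl)
qed

lemma tree_dist_root: "0 < x \<Longrightarrow> tree_dist d 1 x = depth d x"
proof (induction x rule: less_induct)
  case (less x)
  show ?case
  proof (cases "x = 1")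
    case False
    with less.prems have "2 \<le> x" by simp
    then have "tree_dist d 1 (parent d x) = depth d (parent d x)"
      using less.IH parent_less by simp
    with \<open>2 \<le> x\<close> show ?thesis
      using tree_dist_less[of 1 x d] depth_step[of x d] by simp
  qed simp
qed

lemma tree_dist_add_le_depth:
  assumes "0 < u" "0 < v" "t \<le> depth d u" "t \<le> depth d v" "ancestor d u t = ancestor d v t"
  shows "tree_dist d u v + 2 * t \<le> depth d u + depth d v"
proof -
  from assms(1,2) have "\<forall>t. t \<le> depth d u \<longrightarrow> t \<le> depth d v \<longrightarrow> ancestor d u t = ancestor d v t
    \<longrightarrow> tree_dist d u v + 2 * t \<le> depth d u + depth d v"
  proof (induction rule: tree_dist_induct[where d = d])
    case (sym u v)
    then show ?case by (metis tree_dist_sym add.commute)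
  next
    case (step u v)
    show ?case
    proof (intro allI impI)
      fix t assume t: "t \<le> depth d u" "t \<le> depth d v" and a: "ancestor d u t = ancestor d v t"
      have "t \<noteq> depth d v"
      proof
        assume "t = depth d v"
        with a have "ancestor d u t = v" by simp
        with ancestor_le[OF step.hyps(1), of d t] step.hyps(2) show False by simp
      qed
      with t have "t < depth d v" by simp
      then have "tree_dist d u (parent d v) + 2 * t \<le> depth d u + depth d (parent d v)"
        using step.IH t a by (simp add: ancestor_parent depth_parent)
      then show "tree_dist d u v + 2 * t \<le> depth d u + depth d v"
        using step.hyps \<open>t < depth d v\<close> by (simp add: tree_dist_less depth_parent)
    qed
  qed simp
  with assms(3-5) show ?thesis by blast
qed

lemma depth_add_le_tree_dist:
  assumes "0 < u" "0 < v" "0 < t" "t \<le> depth d u" "t \<le> depth d v"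
    and "ancestor d u t \<noteq> ancestor d v t"
  shows "depth d u + depth d v + 2 \<le> tree_dist d u v + 2 * t"
proof -
  from assms(1,2) have "\<forall>t. 0 < t \<longrightarrow> t \<le> depth d u \<longrightarrow> t \<le> depth d v \<longrightarrow> ancestor d u t \<noteq> ancestor d v t
    \<longrightarrow> depth d u + depth d v + 2 \<le> tree_dist d u v + 2 * t"
  proof (induction rule: tree_dist_induct[where d = d])
    case (sym u v)
    then show ?case by (metis tree_dist_sym add.commute)
  next
    case (step u v)
    show ?case
    proof (intro allI impI)
      fix t assume t: "0 < t" "t \<le> depth d u" "t \<le> depth d v"
        and a: "ancestor d u t \<noteq> ancestor d v t"
      show "depth d u + depth d v + 2 \<le> tree_dist d u v + 2 * t"
      proof (cases "t = depth d v")
        case True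
        have "depth d u \<le> depth d v"
          using step.hyps(2) by (simp add: depth_mono)
        with t True have "depth d u = t" by simp
        moreover have "depth d (parent d v) = t - 1"
          using True by (simp add: depth_parent)
        ultimately have "u \<noteq> parent d v" using t(1) by auto
        then have "0 < tree_dist d u (parent d v)"
          using step.hyps(1) by (simp add: tree_dist_pos)
        with step.hyps True \<open>depth d u = t\<close> show ?thesis
          by (simp add: tree_dist_less)
      next
        case False
        with t have "t < depth d v" by simp
        then have "depth d u + depth d (parent d v) + 2 \<le> tree_dist d u (parent d v) + 2 * t"
          using step.IH t a by (simp add: ancestor_parent depth_parent)
        then show ?thesis
          using step.hyps \<open>t < depth d v\<close> by (simp add: tree_dist_less depth_parent)
      qed
    qed
  qed simp
  with assms(3-6) show ?thesis by blast
qed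

text \<open>The subtree of the root that contains x, named by its top vertex (of depth 1);
  the root is its own branch.\<close>
definition branch :: "nat \<Rightarrow> nat \<Rightarrow> nat" where
  "branch d x = ancestor d x 1"

lemma branch_eq_1_iff: "0 < x \<Longrightarrow> branch d x = 1 \<longleftrightarrow> x = 1"
  using depth_ancestor[of 1 d x] depth_eq_0_iff[of x d]
  by (cases "depth d x = 0") (auto simp: branch_def)

lemma tree_dist_diff_branch:
  assumes "0 < u" "0 < v" "branch d u \<noteq> branch d v"
  shows "tree_dist d u v = depth d u + depth d v"
proof (cases "depth d u = 0 \<or> depth d v = 0")
  case True
  with assms(1,2) have "u = 1 \<or> v = 1" by (simp add: depth_eq_0_iff)
  with assms(1,2) show ?thesis
    by (metis tree_dist_root tree_dist_sym depth_le_one order_refl add_0 add_0_right)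
next
  case False
  then have "depth d u + depth d v + 2 \<le> tree_dist d u v + 2 * 1"
    using assms by (intro depth_add_le_tree_dist) (auto simp: branch_def)
  moreover have "tree_dist d u v + 2 * 0 \<le> depth d u + depth d v"
    using assms(1,2) by (intro tree_dist_add_le_depth) (simp_all add: ancestor_0)
  ultimately show ?thesis by simp
qed

lemma tree_dist_same_branch:
  assumes "0 < u" "0 < v" "u \<noteq> v" "branch d u = branch d v"
  shows "tree_dist d u v + 2 \<le> depth d u + depth d v"
proof -
  have "u \<noteq> 1" "v \<noteq> 1"
    using assms branch_eq_1_iff[of u d] branch_eq_1_iff[of v d] by auto
  with assms(1,2) have "1 \<le> depth d u" "1 \<le> depth d v"
    using depth_eq_0_iff[of u d] depth_eq_0_iff[of v d] by auto
  with assms show ?thesis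
    using tree_dist_add_le_depth[of u v 1 d] by (simp add: branch_def)
qed

lemma tree_dist_parent_le:
  assumes "2 \<le> w" "0 < v"
  shows "tree_dist d w v \<le> Suc (tree_dist d (parent d w) v) \<and>
    tree_dist d (parent d w) v \<le> Suc (tree_dist d w v)"
  using assms(2)
proof (induction v rule: less_induct)
  case (less v)
  have pw: "parent d w < w" using parent_less[OF assms(1)] .
  consider "w = v" | "v < w" | "w < v" by linarith
  then show ?case
  proof cases
    case 1
    then show ?thesis using pw by (simp add: tree_dist_less)
  next
    case 2
    then show ?thesis using less.prems by (simp add: tree_dist_greater)
  next
    case 3
    then have "tree_dist d w (parent d v) \<le> Suc (tree_dist d (parent d w) (parent d v)) \<and>
        tree_dist d (parent d w) (parent d v) \<le> Suc (tree_dist d w (parent d v))"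
      using assms(1) parent_less[of v d] by (intro less.IH) auto
    with 3 pw assms(1) show ?thesis by (simp add: tree_dist_less)
  qed
qed

section \<open>The dendrimer is the parent tree\<close>

definition parent_edges :: "nat \<Rightarrow> nat \<Rightarrow> nat set set" where
  "parent_edges d n = (\<lambda>v. {parent d v, v}) ` {2..n}"

lemma parent_eq_iff:
  assumes "0 < d" "0 < u"
  shows "parent d v = u \<longleftrightarrow> (u - 1) * d \<le> v - 3 \<and> v - 3 < u * d"
proof -
  have "parent d v = u \<longleftrightarrow> (v - 3) div d = u - 1"
    using assms(2) by (auto simp: parent_def)
  also have "\<dots> \<longleftrightarrow> u - 1 \<le> (v - 3) div d \<and> (v - 3) div d < u"
    using assms(2) by linarith
  also have "\<dots> \<longleftrightarrow> (u - 1) * d \<le> v - 3 \<and> v - 3 < u * d"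
    using assms(1) by (simp add: less_eq_div_iff_mult_less_eq div_less_iff_less_mult)
  finally show ?thesis .
qed

lemma card_children:
  assumes "0 < d" "0 < u"
  shows "card {v. 2 \<le> v \<and> parent d v = u} = (if u = 1 then Suc d else d)"
proof -
  have ud: "u * d = (u - 1) * d + d"
    using assms(2) by (cases u) auto
  show ?thesis
  proof (cases "u = 1")
    case True
    then have "{v. 2 \<le> v \<and> parent d v = u} = {2..d + 2}"
      using assms by (auto simp: parent_eq_iff)
    with True show ?thesis by simp
  next
    case False
    define a where "a = (u - 1) * d"
    from False assms have "d \<le> a" by (simp add: a_def)
    then have "{v. 2 \<le> v \<and> parent d v = u} = {a + 3..a + d + 2}"
      unfolding parent_eq_iff[OF assms] ud a_def[symmetric] using assms(1) by auto
    with False show ?thesis by simp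
  qed
qed

lemma vdeg_parent_edges:
  "vdeg (parent_edges d n) u = card {v \<in> {2..n}. parent d v = u} + (if 2 \<le> u \<and> u \<le> n then 1 else 0)"
proof -
  have inj: "inj_on (\<lambda>v. {parent d v, v}) {2..n}"
  proof (rule inj_onI)
    fix x y assume "x \<in> {2..n}" "y \<in> {2..n}" "{parent d x, x} = {parent d y, y}"
    with parent_less[of x d] parent_less[of y d] show "x = y"
      by (auto simp: doubleton_eq_iff)
  qed
  have "vdeg (parent_edges d n) u =
      card ((\<lambda>v. {parent d v, v}) ` {v \<in> {2..n}. parent d v = u \<or> v = u})"
    unfolding vdeg_def parent_edges_def by (rule arg_cong[where f = card]) auto
  also have "\<dots> = card {v \<in> {2..n}. parent d v = u \<or> v = u}"
    by (intro card_image inj_on_subset[OF inj]) auto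
  also have "{v \<in> {2..n}. parent d v = u \<or> v = u} = {v \<in> {2..n}. parent d v = u} \<union> ({u} \<inter> {2..n})"
    by auto
  also have "card \<dots> = card {v \<in> {2..n}. parent d v = u} + card ({u} \<inter> {2..n})"
    using parent_less[of u d] by (intro card_Un_disjoint) auto
  finally show ?thesis by simp
qed

lemma finite_children: "0 < d \<Longrightarrow> 0 < u \<Longrightarrow> finite {v. 2 \<le> v \<and> parent d v = u}"
  using card_children[of d u] by (metis card.infinite nat.distinct(1) neq0_conv)

lemma least_low_degree_vertex:
  assumes "0 < d" "0 < m"
  shows "(LEAST u. u \<in> {1..m} \<and> vdeg (parent_edges d m) u \<le> d) = parent d (Suc m)"
proof (rule Least_equality)
  let ?w = "parent d (Suc m)"
  let ?C = "{v. 2 \<le> v \<and> parent d v = ?w}"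
  have fin: "finite ?C" using assms(1) by (simp add: finite_children)
  have "?w \<le> m" using parent_less[of "Suc m" d] assms(2) by simp
  have "?w = 1 \<or> 2 \<le> ?w" using parent_pos[of d "Suc m"] by linarith
  have "{v \<in> {2..m}. parent d v = ?w} \<subseteq> ?C - {Suc m}"
    by auto
  then have "card {v \<in> {2..m}. parent d v = ?w} \<le> card (?C - {Suc m})"
    using fin by (intro card_mono) auto
  also have "\<dots> = card ?C - 1"
    using fin assms(2) by simp
  finally show "?w \<in> {1..m} \<and> vdeg (parent_edges d m) ?w \<le> d"
    using assms \<open>?w \<le> m\<close> card_children[of d ?w] \<open>?w = 1 \<or> 2 \<le> ?w\<close>
    by (auto simp: vdeg_parent_edges)
next
  fix u assume u: "u \<in> {1..m} \<and> vdeg (parent_edges d m) u \<le> d"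
  show "parent d (Suc m) \<le> u"
  proof (rule ccontr)
    assume "\<not> parent d (Suc m) \<le> u"
    then have "v \<le> m" if "parent d v = u" for v
      using parent_mono[of "Suc m" v d] that by (metis not_less_eq_eq)
    then have "{v \<in> {2..m}. parent d v = u} = {v. 2 \<le> v \<and> parent d v = u}"
      by auto
    then have "vdeg (parent_edges d m) u =
        (if u = 1 then Suc d else d) + (if 2 \<le> u \<and> u \<le> m then 1 else 0)"
      using u assms(1) card_children[of d u] by (simp add: vdeg_parent_edges)
    with u show False
      by (cases "u = 1") auto
  qed
qed

lemma dend_edges_eq_parent_edges:
  assumes "0 < d"
  shows "dend_edges d n = parent_edges d n"
  using assms
proof (induction d n rule: dend_edges.induct)
  case (3 d n)
  then have "dend_edges d (Suc (Suc n)) =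
      insert {parent d (Suc (Suc n)), Suc (Suc n)} (parent_edges d (Suc n))"
    using least_low_degree_vertex[of d "Suc n"] by (simp add: Let_def)
  also have "\<dots> = parent_edges d (Suc (Suc n))"
    unfolding parent_edges_def by (auto simp: atLeastAtMostSuc_conv)
  finally show ?case .
qed (simp_all add: parent_edges_def)

lemma is_walk_Cons_Cons: "is_walk E (x # y # xs) \<longleftrightarrow> {x, y} \<in> E \<and> is_walk E (y # xs)"
  unfolding is_walk_def by (auto simp: nth_Cons split: nat.splits)

lemma is_walk_snoc:
  assumes "is_walk E xs" "{last xs, y} \<in> E"
  shows "is_walk E (xs @ [y])"
  unfolding is_walk_def
proof (intro conjI allI impI)
  fix i assume i: "Suc i < length (xs @ [y])"
  show "{(xs @ [y]) ! i, (xs @ [y]) ! Suc i} \<in> E"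
  proof (cases "Suc i < length xs")
    case True
    with assms(1) show ?thesis by (simp add: is_walk_def nth_append)
  next
    case False
    with i have "i = length xs - 1" by simp
    with assms False show ?thesis by (simp add: is_walk_def nth_append last_conv_nth)
  qed
qed simp

lemma is_walk_rev: "is_walk E xs \<Longrightarrow> is_walk E (rev xs)"
  unfolding is_walk_def
proof (intro conjI allI impI)
  fix i assume walk: "xs \<noteq> [] \<and> (\<forall>i. Suc i < length xs \<longrightarrow> {xs ! i, xs ! Suc i} \<in> E)"
    and i: "Suc i < length (rev xs)"
  then have "{xs ! (length xs - Suc (Suc i)), xs ! Suc (length xs - Suc (Suc i))} \<in> E"
    by simp
  moreover have "Suc (length xs - Suc (Suc i)) = length xs - Suc i"
    using i by simp
  ultimately show "{rev xs ! i, rev xs ! Suc i} \<in> E"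
    using i by (simp add: rev_nth insert_commute)
qed simp

lemma tree_dist_edge_le:
  assumes "{a, b} \<in> parent_edges d n" "0 < v"
  shows "tree_dist d a v \<le> Suc (tree_dist d b v)"
proof -
  from assms(1) obtain w where "2 \<le> w" "{a, b} = {parent d w, w}"
    unfolding parent_edges_def by auto
  then show ?thesis
    using tree_dist_parent_le[of w v d] assms(2) by (auto simp: doubleton_eq_iff)
qed

lemma tree_dist_le_walk_length:
  assumes "is_walk (parent_edges d n) xs" "0 < v"
  shows "tree_dist d (hd xs) v \<le> length xs - 1 + tree_dist d (last xs) v"
  using assms(1)
proof (induction xs rule: induct_list012)
  case (3 x y zs)
  then have "{x, y} \<in> parent_edges d n" "is_walk (parent_edges d n) (y # zs)"
    by (simp_all add: is_walk_Cons_Cons)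
  with 3 show ?case
    using tree_dist_edge_le[of x y d n v] assms(2) by simp
qed (simp_all add: is_walk_def)

lemma exists_walk_tree_dist:
  assumes "u \<in> {1..n}" "v \<in> {1..n}"
  shows "\<exists>xs. is_walk (parent_edges d n) xs \<and> length xs = Suc (tree_dist d u v) \<and>
    hd xs = u \<and> last xs = v"
proof -
  let ?E = "parent_edges d n"
  from assms have "0 < u" "0 < v" by auto
  then have "u \<le> n \<longrightarrow> v \<le> n \<longrightarrow>
    (\<exists>xs. is_walk ?E xs \<and> length xs = Suc (tree_dist d u v) \<and> hd xs = u \<and> last xs = v)"
  proof (induction rule: tree_dist_induct[where d = d])
    case (refl u)
    show ?case by (auto simp: is_walk_def intro!: exI[of _ "[u]"])
  next
    case (sym u v)
    then show ?case
      by (metis hd_rev is_walk_rev last_rev length_rev tree_dist_sym)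
  next
    case (step u v)
    show ?case
    proof (intro impI)
      assume "u \<le> n" "v \<le> n"
      moreover have "parent d v \<le> n"
        using parent_le[of v d] step.hyps \<open>v \<le> n\<close> by simp
      ultimately obtain xs where xs: "is_walk ?E xs" "length xs = Suc (tree_dist d u (parent d v))"
        "hd xs = u" "last xs = parent d v"
        using step.IH by blast
      have "{last xs, v} \<in> ?E"
        using xs(4) step.hyps \<open>v \<le> n\<close> unfolding parent_edges_def by auto
      with xs(1) have "is_walk ?E (xs @ [v])"
        by (rule is_walk_snoc)
      moreover have "xs \<noteq> []" using xs(2) by auto
      ultimately show
        "\<exists>ys. is_walk ?E ys \<and> length ys = Suc (tree_dist d u v) \<and> hd ys = u \<and> last ys = v"
        using xs step.hyps by (intro exI[of _ "xs @ [v]"]) (simp add: tree_dist_less)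
    qed
  qed
  with assms show ?thesis by simp
qed

lemma gdist_parent_edges:
  assumes "u \<in> {1..n}" "v \<in> {1..n}"
  shows "gdist (parent_edges d n) u v = tree_dist d u v"
  unfolding gdist_def
proof (rule Least_equality)
  show "\<exists>xs. is_walk (parent_edges d n) xs \<and> length xs = Suc (tree_dist d u v) \<and>
      hd xs = u \<and> last xs = v"
    using assms by (rule exists_walk_tree_dist)
next
  fix k
  assume "\<exists>xs. is_walk (parent_edges d n) xs \<and> length xs = Suc k \<and> hd xs = u \<and> last xs = v"
  then show "tree_dist d u v \<le> k"
    using tree_dist_le_walk_length[of d n _ v] assms by fastforce
qed

lemma coeff_wiener_poly:
  "coeff (wiener_poly n E) r =
    int (card {(u, v). u \<in> {1..n} \<and> v \<in> {1..n} \<and> u < v \<and> gdist E u v = r})"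
proof -
  have "coeff (wiener_poly n E) r = (\<Sum>u\<in>{1..n}. \<Sum>v\<in>{u<..n}. of_bool (gdist E u v = r))"
    unfolding wiener_poly_def by (simp add: coeff_sum of_bool_def)
  also have "\<dots> = (\<Sum>u\<in>{1..n}. int (card {v \<in> {u<..n}. gdist E u v = r}))"
    by (intro sum.cong refl) (simp add: Int_def)
  also have "\<dots> = int (card (SIGMA u:{1..n}. {v \<in> {u<..n}. gdist E u v = r}))"
    by (simp add: card_SigmaI)
  also have "(SIGMA u:{1..n}. {v \<in> {u<..n}. gdist E u v = r}) =
      {(u, v). u \<in> {1..n} \<and> v \<in> {1..n} \<and> u < v \<and> gdist E u v = r}"
    by auto
  finally show ?thesis .
qed

lemma card_ordered_pairs:
  fixes f :: "'a::linorder \<Rightarrow> 'a \<Rightarrow> 'b"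
  assumes "finite A" "\<And>u v. f u v = f v u"
  shows "card {(u, v). u \<in> A \<and> v \<in> A \<and> u \<noteq> v \<and> f u v = r} =
    2 * card {(u, v). u \<in> A \<and> v \<in> A \<and> u < v \<and> f u v = r}"
proof -
  let ?U = "{(u, v). u \<in> A \<and> v \<in> A \<and> u < v \<and> f u v = r}"
  have "finite ?U"
    by (rule finite_subset[of _ "A \<times> A"]) (auto simp: assms(1))
  have "{(u, v). u \<in> A \<and> v \<in> A \<and> u \<noteq> v \<and> f u v = r} = ?U \<union> prod.swap ` ?U"
  proof (intro equalityI subsetI)
    fix x assume "x \<in> {(u, v). u \<in> A \<and> v \<in> A \<and> u \<noteq> v \<and> f u v = r}"
    then show "x \<in> ?U \<union> prod.swap ` ?U"
      using assms(2) by (cases x) (auto simp: neq_iff intro: image_eqI[of _ prod.swap])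
  qed (use assms(2) in auto)
  also have "card \<dots> = card ?U + card (prod.swap ` ?U)"
    using \<open>finite ?U\<close> by (intro card_Un_disjoint) auto
  also have "card (prod.swap ` ?U) = card ?U"
    by (simp add: card_image)
  finally show ?thesis by simp
qed

lemma two_mult_coeff_dendrimer_W:
  assumes "0 < d"
  shows "2 * coeff (dendrimer_W n d) r =
    int (card {(u, v). u \<in> {1..n} \<and> v \<in> {1..n} \<and> u \<noteq> v \<and> tree_dist d u v = r})"
proof -
  have "{(u, v). u \<in> {1..n} \<and> v \<in> {1..n} \<and> u < v \<and> gdist (parent_edges d n) u v = r} =
      {(u, v). u \<in> {1..n} \<and> v \<in> {1..n} \<and> u < v \<and> tree_dist d u v = r}"
    by (auto simp: gdist_parent_edges)
  then have "coeff (dendrimer_W n d) r =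
      int (card {(u, v). u \<in> {1..n} \<and> v \<in> {1..n} \<and> u < v \<and> tree_dist d u v = r})"
    by (simp only: dendrimer_W_def dend_edges_eq_parent_edges[OF assms] coeff_wiener_poly)
  then show ?thesis
    using card_ordered_pairs[of "{1..n}" "tree_dist d" r, OF finite_atLeastAtMost tree_dist_sym]
    by simp
qed

section \<open>Numbering by levels\<close>

definition level_size :: "nat \<Rightarrow> nat \<Rightarrow> nat" where
  "level_size d j = (if j = 0 then 1 else (d + 1) * d ^ (j - 1))"

definition level_offset :: "nat \<Rightarrow> nat \<Rightarrow> nat" where
  "level_offset d j = (\<Sum>i<j. level_size d i)"

definition level_vertex :: "nat \<Rightarrow> nat \<Rightarrow> nat \<Rightarrow> nat" where
  "level_vertex d j i = level_offset d j + 1 + i"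

lemma level_vertex_eq_iff [simp]: "level_vertex d j a = level_vertex d j b \<longleftrightarrow> a = b"
  by (simp add: level_vertex_def)

lemma level_vertex_pos [simp]: "0 < level_vertex d j i"
  by (simp add: level_vertex_def)

lemma inj_level_vertex: "inj (level_vertex d j)"
  by (simp add: inj_def)

lemma level_offset_Suc: "level_offset d (Suc j) = level_offset d j + level_size d j"
  by (simp add: level_offset_def)

lemma level_offset_mono: "j \<le> j' \<Longrightarrow> level_offset d j \<le> level_offset d j'"
  unfolding level_offset_def by (rule sum_mono2) auto

lemma level_offset_Suc_eq_geometric: "level_offset d (Suc k) = 1 + (d + 1) * (\<Sum>i<k. d ^ i)"
  unfolding level_offset_def sum.lessThan_Suc_shift by (simp add: level_size_def sum_distrib_left)

lemma level_offset_Suc_Suc: "level_offset d (Suc (Suc j)) = d * level_offset d (Suc j) + 2"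
proof (induction j)
  case 0
  then show ?case by (simp add: level_offset_def level_size_def)
next
  case (Suc j)
  have "level_size d (Suc (Suc j)) = d * level_size d (Suc j)"
    unfolding level_size_def by (simp add: mult.left_commute)
  with Suc have "level_offset d (Suc (Suc (Suc j))) =
      d * (level_offset d (Suc j) + level_size d (Suc j)) + 2"
    by (simp only: level_offset_Suc[of d "Suc (Suc j)"] distrib_left)
  then show ?case
    by (simp only: level_offset_Suc[of d "Suc j", symmetric])
qed

lemma parent_level_vertex:
  assumes "0 < d"
  shows "parent d (level_vertex d (Suc (Suc j)) i) = level_vertex d (Suc j) (i div d)"
proof -
  have "level_vertex d (Suc (Suc j)) i - 3 = i + d * level_offset d (Suc j)"
    by (simp add: level_vertex_def level_offset_Suc_Suc)
  with assms show ?thesis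
    by (simp add: parent_def level_vertex_def)
qed

lemma parent_level_vertex_1:
  assumes "0 < d" "i \<le> d"
  shows "parent d (level_vertex d 1 i) = 1"
  using assms by (simp add: parent_def level_vertex_def level_offset_def level_size_def)

lemma div_less_level_size:
  assumes "0 < d" "i < level_size d (Suc (Suc j))"
  shows "i div d < level_size d (Suc j)"
  using assms by (simp add: level_size_def div_less_iff_less_mult mult_ac)

lemma depth_level_vertex:
  assumes "0 < d" "i < level_size d j"
  shows "depth d (level_vertex d j i) = j"
  using assms(2)
proof (induction j arbitrary: i rule: less_induct)
  case (less j)
  consider "j = 0" | "j = 1" | j' where "j = Suc (Suc j')"
    by (metis One_nat_def not0_implies_Suc)
  then show ?case
  proof cases
    case 1
    with less.prems show ?thesis
      by (simp add: level_vertex_def level_offset_def level_size_def)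
  next
    case 2
    have "2 \<le> level_vertex d 1 i"
      by (simp add: level_vertex_def level_offset_def level_size_def)
    with 2 less.prems assms(1) show ?thesis
      using depth_step[of "level_vertex d 1 i" d] parent_level_vertex_1[of d i]
      by (simp add: level_size_def)
  next
    case 3
    have "2 \<le> level_vertex d j i"
      using 3 by (simp add: level_vertex_def level_offset_Suc_Suc)
    then have "depth d (level_vertex d j i) = Suc (depth d (level_vertex d (Suc j') (i div d)))"
      using 3 assms(1) by (simp add: depth_step parent_level_vertex)
    also have "depth d (level_vertex d (Suc j') (i div d)) = Suc j'"
      using 3 less assms(1) by (simp add: div_less_level_size)
    finally show ?thesis using 3 by simp
  qed
qed

lemma ancestor_level_vertex:
  assumes "0 < d" "0 < t" "t \<le> j" "i < level_size d j"
  shows "ancestor d (level_vertex d j i) t = level_vertex d t (i div d ^ (j - t))"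
  using assms(3,4)
proof (induction j arbitrary: i)
  case (Suc j)
  show ?case
  proof (cases "t = Suc j")
    case True
    with Suc.prems show ?thesis
      using ancestor_depth[of d "level_vertex d (Suc j) i"]
      by (simp add: depth_level_vertex assms(1))
  next
    case False
    with Suc.prems assms(2) obtain j' where j': "j = Suc j'" "t \<le> j"
      by (cases j) auto
    have "ancestor d (level_vertex d (Suc j) i) t = ancestor d (level_vertex d j (i div d)) t"
      using Suc.prems j' assms(1) depth_level_vertex[OF assms(1) Suc.prems(2)]
      by (simp add: ancestor_parent[symmetric] parent_level_vertex)
    also have "\<dots> = level_vertex d t (i div d ^ (Suc j - t))"
      using Suc.IH[of "i div d"] Suc.prems j' assms(1)
      by (simp add: div_less_level_size div_mult2_eq Suc_diff_le)
    finally show ?thesis .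
  qed
qed (use assms(2) in simp)

lemma level_vertex_cases:
  assumes "0 < x" "x \<le> level_offset d J"
  shows "\<exists>j<J. \<exists>i<level_size d j. x = level_vertex d j i"
  using assms(2)
proof (induction J)
  case (Suc J)
  show ?case
  proof (cases "x \<le> level_offset d J")
    case True
    with Suc.IH show ?thesis using less_SucI by blast
  next
    case False
    with Suc.prems have "x - level_offset d J - 1 < level_size d J"
      "x = level_vertex d J (x - level_offset d J - 1)"
      by (auto simp: level_offset_Suc level_vertex_def)
    then show ?thesis by blast
  qed
qed (use assms(1) in \<open>simp add: level_offset_def\<close>)

lemma m_k_eq_level_offset:
  assumes "2 \<le> d"
  shows "m_k d k + 2 * d ^ k - 1 = level_offset d (Suc k) + 3 * d ^ k"
proof -
  define G where "G = (\<Sum>i<k. d ^ i)"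
  have "int (d ^ k - 1) = int ((d - 1) * G)"
    using assms power_diff_1_eq[of "int d" k] by (simp add: G_def)
  then have G: "d ^ k - 1 = (d - 1) * G"
    by (simp only: of_nat_eq_iff)
  then have "m_k d k = 3 + 2 * d * G"
    using assms by (simp add: m_k_def)
  moreover have "1 \<le> d ^ k"
    using assms by simp
  moreover have "d * G = G + (d - 1) * G"
    using assms by (cases d) auto
  ultimately show ?thesis
    using G by (simp add: level_offset_Suc_eq_geometric G_def[symmetric] algebra_simps)
qed

lemma div_eq_iff_nat:
  fixes m :: nat
  assumes "0 < m"
  shows "i div m = c \<longleftrightarrow> c * m \<le> i \<and> i < c * m + m"
proof -
  have "i div m = c \<longleftrightarrow> c \<le> i div m \<and> i div m < Suc c"
    by linarith
  also have "\<dots> \<longleftrightarrow> c * m \<le> i \<and> i < c * m + m"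
    using assms by (simp add: less_eq_div_iff_mult_less_eq div_less_iff_less_mult add.commute)
  finally show ?thesis .
qed

lemma card_div_eq:
  fixes m :: nat
  assumes "0 < m" "c < b"
  shows "card {i \<in> {..<b * m}. i div m = c} = m"
proof -
  have "c * m + m \<le> b * m"
    using assms(2) by (metis add.commute mult_Suc mult_le_mono1 Suc_leI)
  then have "{i \<in> {..<b * m}. i div m = c} = {c * m..<c * m + m}"
    using assms(1) by (auto simp: div_eq_iff_nat)
  then show ?thesis by simp
qed

lemma card_div_neq:
  fixes m :: nat
  assumes "0 < m" "c < b"
  shows "card {i \<in> {..<b * m}. i div m \<noteq> c} = b * m - m"
proof -
  have "card {i \<in> {..<b * m}. i div m \<noteq> c} = card ({..<b * m} - {i \<in> {..<b * m}. i div m = c})"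
    by (rule arg_cong[where f = card]) auto
  also have "\<dots> = card {..<b * m} - card {i \<in> {..<b * m}. i div m = c}"
    by (rule card_Diff_subset) auto
  finally show ?thesis
    using card_div_eq[OF assms] by simp
qed

lemma card_filter_image:
  "inj f \<Longrightarrow> card {v \<in> f ` I. P v} = card {i \<in> I. P (f i)}"
proof -
  assume "inj f"
  have "{v \<in> f ` I. P v} = f ` {i \<in> I. P (f i)}" by auto
  with \<open>inj f\<close> show ?thesis by (simp add: card_image inj_on_subset)
qed

lemma card_Sigma_const:
  "finite A \<Longrightarrow> (\<And>a. a \<in> A \<Longrightarrow> finite (B a)) \<Longrightarrow> (\<And>a. a \<in> A \<Longrightarrow> card (B a) = c)
   \<Longrightarrow> card (Sigma A B) = card A * c"
  by (simp add: card_SigmaI)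

lemma card_div_eq_div_neq:
  fixes m e :: nat
  assumes "0 < m" "0 < e" "i0 < b * (e * m)"
  shows "card {i \<in> {..<b * (e * m)}. i div (e * m) = i0 div (e * m) \<and> i div m \<noteq> i0 div m} =
    e * m - m"
proof -
  let ?A = "{i \<in> {..<b * (e * m)}. i div (e * m) = i0 div (e * m)}"
  let ?B = "{i \<in> {..<(b * e) * m}. i div m = i0 div m}"
  have div_div: "i div (e * m) = i div m div e" for i
    by (metis div_mult2_eq mult.commute)
  have "{i \<in> {..<b * (e * m)}. i div (e * m) = i0 div (e * m) \<and> i div m \<noteq> i0 div m} = ?A - ?B"
    by (auto simp: mult.assoc)
  moreover have "?B \<subseteq> ?A"
    by (auto simp: div_div mult.assoc)
  moreover have "card ?A = e * m"
    using assms card_div_eq[of "e * m" "i0 div (e * m)" b] by (simp add: div_less_iff_less_mult)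
  moreover have "card ?B = m"
    using assms card_div_eq[of m "i0 div m" "b * e"]
    by (simp add: div_less_iff_less_mult mult.assoc)
  ultimately show ?thesis
    by (simp add: card_Diff_subset)
qed

lemma distance_2k_count_bound:
  fixes a d :: nat
  assumes "2 \<le> d"
  shows "2 * (3 * (d * a) * a) + (d + 1) * a * (d * a) + 3 * (d * a) * (d * a - a) \<le>
    2 * (3 * (d * a) * (d * a))"
proof -
  obtain e where e: "d = e + 2"
    using assms by (metis add.commute le_Suc_ex)
  have "d * a - a = (e + 1) * a"
    unfolding e by (simp add: algebra_simps)
  then have "2 * (3 * (d * a) * a) + (d + 1) * a * (d * a) + 3 * (d * a) * (d * a - a) =
      (a * a) * ((e + 2) * (4 * e + 12))"
    unfolding e by (simp add: algebra_simps)
  also have "\<dots> \<le> (a * a) * ((e + 2) * (6 * e + 12))"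
    by (intro mult_le_mono2) simp
  also have "\<dots> = 2 * (3 * (d * a) * (d * a))"
    unfolding e by (simp add: algebra_simps)
  finally show ?thesis .
qed

section \<open>The dendrimer on p_k vertices\<close>

locale truncated_dendrimer =
  fixes d k n :: nat
  assumes two_le_d: "2 \<le> d"
    and n_eq: "n = level_offset d (Suc k) + 3 * d ^ k"
begin

lemma d_pos: "0 < d"
  using two_le_d by simp

lemma three_pow_le_level_size: "3 * d ^ k \<le> level_size d (Suc k)"
  using two_le_d by (simp add: level_size_def)

definition level :: "nat \<Rightarrow> nat set" where
  "level j = {x \<in> {1..n}. depth d x = j}"

lemma mem_level_iff:
  "x \<in> level j \<longleftrightarrow> (\<exists>i<level_size d j. x = level_vertex d j i \<and> level_vertex d j i \<le> n)"
proof
  assume x: "x \<in> level j"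
  have "n \<le> level_offset d (Suc (Suc k))"
    using three_pow_le_level_size by (simp add: n_eq level_offset_Suc[of d "Suc k"])
  with x obtain j' i where "i < level_size d j'" "x = level_vertex d j' i"
    using level_vertex_cases[of x d "Suc (Suc k)"] unfolding level_def by auto
  with x show "\<exists>i<level_size d j. x = level_vertex d j i \<and> level_vertex d j i \<le> n"
    using depth_level_vertex[OF d_pos] unfolding level_def by auto
next
  assume "\<exists>i<level_size d j. x = level_vertex d j i \<and> level_vertex d j i \<le> n"
  then show "x \<in> level j"
    using depth_level_vertex[OF d_pos] by (auto simp: level_def Suc_le_eq)
qed

lemma level_eq: "j \<le> k \<Longrightarrow> level j = level_vertex d j ` {..<level_size d j}"
proof -
  assume "j \<le> k"
  then have "level_vertex d j i \<le> n" if "i < level_size d j" for i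
    using that level_offset_mono[of "Suc j" "Suc k" d]
    by (simp add: n_eq level_vertex_def level_offset_Suc)
  then show ?thesis
    by (intro set_eqI) (auto simp: mem_level_iff)
qed

lemma level_Suc_k: "level (Suc k) = level_vertex d (Suc k) ` {..<3 * d ^ k}"
proof -
  have "level_vertex d (Suc k) i \<le> n \<longleftrightarrow> i < 3 * d ^ k" for i
    by (simp add: n_eq level_vertex_def Suc_le_eq)
  then show ?thesis
    using three_pow_le_level_size by (intro set_eqI) (auto simp: mem_level_iff)
qed

lemma finite_level: "finite (level j)"
  by (simp add: level_def)

lemma card_level: "j \<le> k \<Longrightarrow> card (level j) = level_size d j"
  by (simp add: level_eq card_image inj_on_subset[OF inj_level_vertex])

lemma card_level_Suc_k: "card (level (Suc k)) = 3 * d ^ k"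
  by (simp add: level_Suc_k card_image inj_on_subset[OF inj_level_vertex])

lemma depth_le_Suc_k:
  assumes "x \<in> {1..n}"
  shows "depth d x \<le> Suc k"
proof (rule ccontr)
  assume "\<not> depth d x \<le> Suc k"
  from assms obtain i where "x = level_vertex d (depth d x) i" "x \<le> n"
    using mem_level_iff[of x "depth d x"] by (auto simp: level_def)
  moreover have "level_offset d (Suc (Suc k)) \<le> level_offset d (depth d x)"
    using \<open>\<not> depth d x \<le> Suc k\<close> by (intro level_offset_mono) simp
  ultimately show False
    using three_pow_le_level_size
    by (simp add: n_eq level_vertex_def level_offset_Suc[of d "Suc k"])
qed

lemma branch_level_vertex:
  "0 < j \<Longrightarrow> i < level_size d j \<Longrightarrow>
    branch d (level_vertex d j i) = level_vertex d 1 (i div d ^ (j - 1))"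
  using ancestor_level_vertex[OF d_pos] by (simp add: branch_def)

lemma card_level_other_branch:
  assumes "j \<le> k" "c \<le> d"
  shows "card {v \<in> level j. branch d v \<noteq> level_vertex d 1 c} = d ^ j"
proof (cases j)
  case 0
  have "level j = {1}"
    using 0 assms(1)
    by (simp add: level_eq level_vertex_def level_offset_def level_size_def lessThan_Suc)
  moreover have "level_vertex d 1 c \<noteq> 1"
    by (simp add: level_vertex_def level_offset_def level_size_def)
  moreover have "branch d 1 = 1"
    by (simp add: branch_def)
  ultimately have "{v \<in> level j. branch d v \<noteq> level_vertex d 1 c} = {1}"
    by force
  with 0 show ?thesis by simp
next
  case (Suc j')
  have "card {v \<in> level j. branch d v \<noteq> level_vertex d 1 c} =
      card {i \<in> {..<(d + 1) * d ^ j'}. i div d ^ j' \<noteq> c}"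
    unfolding level_eq[OF assms(1)] card_filter_image[OF inj_level_vertex] using Suc
    by (intro arg_cong[where f = card] Collect_cong) (auto simp: branch_level_vertex level_size_def)
  also have "\<dots> = d ^ j"
    using Suc assms(2) d_pos card_div_neq[of "d ^ j'" c "d + 1"] by simp
  finally show ?thesis .
qed

lemma card_level_Suc_k_other_branch:
  assumes "c < 3"
  shows "card {v \<in> level (Suc k). branch d v \<noteq> level_vertex d 1 c} = 2 * d ^ k"
proof -
  have "card {v \<in> level (Suc k). branch d v \<noteq> level_vertex d 1 c} =
      card {i \<in> {..<3 * d ^ k}. i div d ^ k \<noteq> c}"
    unfolding level_Suc_k card_filter_image[OF inj_level_vertex]
    using three_pow_le_level_size
    by (intro arg_cong[where f = card] Collect_cong) (auto simp: branch_level_vertex)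
  also have "\<dots> = 2 * d ^ k"
    using assms d_pos card_div_neq[of "d ^ k" c 3] by simp
  finally show ?thesis .
qed

lemma branch_level:
  assumes "0 < j" "j \<le> k" "v \<in> level j"
  obtains c where "c \<le> d" "branch d v = level_vertex d 1 c"
proof -
  from assms obtain i where "i < level_size d j" "v = level_vertex d j i"
    by (auto simp: level_eq)
  moreover from this have "i div d ^ (j - 1) \<le> d"
    using assms(1) d_pos
    by (simp add: level_size_def div_less_iff_less_mult less_Suc_eq_le[symmetric])
  ultimately show ?thesis
    using that assms(1) by (simp add: branch_level_vertex)
qed

lemma branch_level_Suc_k:
  assumes "v \<in> level (Suc k)"
  obtains c where "c < 3" "branch d v = level_vertex d 1 c"
proof -
  from assms obtain i where "i < 3 * d ^ k" "v = level_vertex d (Suc k) i"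
    by (auto simp: level_Suc_k)
  moreover from this have "i div d ^ k < 3"
    using d_pos by (simp add: div_less_iff_less_mult)
  ultimately show ?thesis
    using that three_pow_le_level_size by (simp add: branch_level_vertex)
qed

lemma card_bottom_same_branch:
  assumes "0 < k" "u \<in> level (Suc k)"
  shows "card {v \<in> level (Suc k). branch d v = branch d u \<and> ancestor d v 2 \<noteq> ancestor d u 2} =
    d ^ k - d ^ (k - 1)"
proof -
  have dk: "d ^ k = d * d ^ (k - 1)"
    using assms(1) by (simp add: power_eq_if)
  from assms(2) obtain i0 where i0: "i0 < 3 * d ^ k" "u = level_vertex d (Suc k) i0"
    by (auto simp: level_Suc_k)
  have anc: "branch d (level_vertex d (Suc k) i) = level_vertex d 1 (i div d ^ k)"
    "ancestor d (level_vertex d (Suc k) i) 2 = level_vertex d 2 (i div d ^ (k - 1))"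
    if "i < 3 * d ^ k" for i
    using that three_pow_le_level_size assms(1) branch_level_vertex[of "Suc k" i]
      ancestor_level_vertex[OF d_pos, of 2 "Suc k" i]
    by auto
  have "card {v \<in> level (Suc k). branch d v = branch d u \<and> ancestor d v 2 \<noteq> ancestor d u 2} =
      card {i \<in> {..<3 * d ^ k}.
        i div d ^ k = i0 div d ^ k \<and> i div d ^ (k - 1) \<noteq> i0 div d ^ (k - 1)}"
    unfolding level_Suc_k card_filter_image[OF inj_level_vertex] using i0
    by (intro arg_cong[where f = card] Collect_cong) (auto simp: anc)
  also have "\<dots> = d ^ k - d ^ (k - 1)"
    using i0 d_pos card_div_eq_div_neq[of "d ^ (k - 1)" d i0 3] unfolding dk by simp
  finally show ?thesis .
qed

definition pairs_at :: "nat \<Rightarrow> (nat \<times> nat) set" where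
  "pairs_at r = {(u, v). u \<in> {1..n} \<and> v \<in> {1..n} \<and> u \<noteq> v \<and> tree_dist d u v = r}"

definition cross_branch_pairs :: "nat \<Rightarrow> nat \<Rightarrow> (nat \<times> nat) set" where
  "cross_branch_pairs j j' = (SIGMA u:level j. {v \<in> level j'. branch d v \<noteq> branch d u})"

definition bottom_pairs_meeting_at_depth_1 :: "(nat \<times> nat) set" where
  "bottom_pairs_meeting_at_depth_1 = (SIGMA u:level (Suc k).
     {v \<in> level (Suc k). branch d v = branch d u \<and> ancestor d v 2 \<noteq> ancestor d u 2})"

lemma finite_cross_branch_pairs: "finite (cross_branch_pairs j j')"
  by (simp add: cross_branch_pairs_def finite_level)

lemma card_cross_branch_pairs_swap:
  "card (cross_branch_pairs j j') = card (cross_branch_pairs j' j)"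
proof -
  have "cross_branch_pairs j j' = prod.swap ` cross_branch_pairs j' j"
    by (auto simp: cross_branch_pairs_def)
  then show ?thesis by (simp add: card_image)
qed

lemma card_cross_branch_pairs_bottom:
  "card (cross_branch_pairs (Suc k) (Suc k)) = 3 * d ^ k * (2 * d ^ k)"
  unfolding cross_branch_pairs_def
proof (subst card_Sigma_const)
  fix u assume "u \<in> level (Suc k)"
  then show "card {v \<in> level (Suc k). branch d v \<noteq> branch d u} = 2 * d ^ k"
    by (rule branch_level_Suc_k) (use card_level_Suc_k_other_branch in simp)
qed (simp_all add: finite_level card_level_Suc_k)

lemma card_cross_branch_pairs_from_bottom:
  "j \<le> k \<Longrightarrow> card (cross_branch_pairs (Suc k) j) = 3 * d ^ k * d ^ j"
  unfolding cross_branch_pairs_def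
proof (subst card_Sigma_const)
  fix u assume "j \<le> k" "u \<in> level (Suc k)"
  then show "card {v \<in> level j. branch d v \<noteq> branch d u} = d ^ j"
    using two_le_d by (elim branch_level_Suc_k) (use card_level_other_branch in simp)
qed (simp_all add: finite_level card_level_Suc_k)

lemma card_cross_branch_pairs_upper:
  "0 < j \<Longrightarrow> j \<le> k \<Longrightarrow> j' \<le> k \<Longrightarrow> card (cross_branch_pairs j j') = level_size d j * d ^ j'"
  unfolding cross_branch_pairs_def
proof (subst card_Sigma_const)
  fix u assume j: "0 < j" "j \<le> k" and "j' \<le> k" and u: "u \<in> level j"
  obtain c where "c \<le> d" "branch d u = level_vertex d 1 c"
    using j u by (rule branch_level)
  with \<open>j' \<le> k\<close> show "card {v \<in> level j'. branch d v \<noteq> branch d u} = d ^ j'"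
    using card_level_other_branch[of j' c] by simp
qed (simp_all add: finite_level card_level)

lemma card_bottom_pairs_meeting_at_depth_1:
  assumes "0 < k"
  shows "card bottom_pairs_meeting_at_depth_1 = 3 * d ^ k * (d ^ k - d ^ (k - 1))"
  unfolding bottom_pairs_meeting_at_depth_1_def
proof (subst card_Sigma_const)
  fix u assume "u \<in> level (Suc k)"
  with assms show "card {v \<in> level (Suc k).
      branch d v = branch d u \<and> ancestor d v 2 \<noteq> ancestor d u 2} = d ^ k - d ^ (k - 1)"
    by (rule card_bottom_same_branch)
qed (simp_all add: finite_level card_level_Suc_k)

lemma mem_cross_branch_pairs_iff:
  "(u, v) \<in> cross_branch_pairs j j' \<longleftrightarrow>
    u \<in> {1..n} \<and> v \<in> {1..n} \<and> depth d u = j \<and> depth d v = j' \<and> branch d u \<noteq> branch d v"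
  by (auto simp: cross_branch_pairs_def level_def)

lemma mem_pairs_at_far_iff:
  assumes "2 * k + 1 \<le> r"
  shows "(u, v) \<in> pairs_at r \<longleftrightarrow>
    u \<in> {1..n} \<and> v \<in> {1..n} \<and> branch d u \<noteq> branch d v \<and> depth d u + depth d v = r"
proof
  assume uv: "(u, v) \<in> pairs_at r"
  then have "u \<in> {1..n}" "v \<in> {1..n}" "u \<noteq> v" "tree_dist d u v = r"
    by (auto simp: pairs_at_def)
  moreover have "branch d u \<noteq> branch d v"
  proof
    assume "branch d u = branch d v"
    with calculation have "r + 2 \<le> depth d u + depth d v"
      using tree_dist_same_branch[of u v d] by auto
    with calculation show False
      using depth_le_Suc_k[of u] depth_le_Suc_k[of v] assms by auto
  qed
  ultimately show "u \<in> {1..n} \<and> v \<in> {1..n} \<and> branch d u \<noteq> branch d v \<and> depth d u + depth d v = r"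
    using tree_dist_diff_branch[of u v d] by auto
next
  assume "u \<in> {1..n} \<and> v \<in> {1..n} \<and> branch d u \<noteq> branch d v \<and> depth d u + depth d v = r"
  then show "(u, v) \<in> pairs_at r"
    using tree_dist_diff_branch[of u v d] by (auto simp: pairs_at_def)
qed

lemma pairs_at_2k_2: "pairs_at (2 * k + 2) = cross_branch_pairs (Suc k) (Suc k)"
proof (intro set_eqI)
  fix x :: "nat \<times> nat"
  obtain u v where x: "x = (u, v)" by (cases x)
  show "x \<in> pairs_at (2 * k + 2) \<longleftrightarrow> x \<in> cross_branch_pairs (Suc k) (Suc k)"
    using depth_le_Suc_k[of u] depth_le_Suc_k[of v] unfolding x
    by (auto simp: mem_pairs_at_far_iff mem_cross_branch_pairs_iff)
qed

lemma pairs_at_2k_1: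
  "pairs_at (2 * k + 1) = cross_branch_pairs (Suc k) k \<union> cross_branch_pairs k (Suc k)"
proof (intro set_eqI)
  fix x :: "nat \<times> nat"
  obtain u v where x: "x = (u, v)" by (cases x)
  show "x \<in> pairs_at (2 * k + 1) \<longleftrightarrow> x \<in> cross_branch_pairs (Suc k) k \<union> cross_branch_pairs k (Suc k)"
    using depth_le_Suc_k[of u] depth_le_Suc_k[of v] unfolding x
    by (auto simp: mem_pairs_at_far_iff mem_cross_branch_pairs_iff)
qed

lemma pairs_at_2k_subset:
  assumes "0 < k"
  shows "pairs_at (2 * k) \<subseteq> cross_branch_pairs (Suc k) (k - 1) \<union>
    cross_branch_pairs (k - 1) (Suc k) \<union> cross_branch_pairs k k \<union> bottom_pairs_meeting_at_depth_1"
proof (intro subsetI)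
  fix x assume "x \<in> pairs_at (2 * k)"
  then obtain u v where x: "x = (u, v)" and "(u, v) \<in> pairs_at (2 * k)"
    by (cases x) auto
  then have uv: "u \<in> {1..n}" "v \<in> {1..n}" "u \<noteq> v" "tree_dist d u v = 2 * k"
    by (auto simp: pairs_at_def)
  have du: "depth d u \<le> Suc k" "depth d v \<le> Suc k"
    using uv depth_le_Suc_k by auto
  show "x \<in> cross_branch_pairs (Suc k) (k - 1) \<union> cross_branch_pairs (k - 1) (Suc k) \<union>
    cross_branch_pairs k k \<union> bottom_pairs_meeting_at_depth_1"
  proof (cases "branch d u = branch d v")
    case False
    then have "depth d u + depth d v = 2 * k"
      using uv tree_dist_diff_branch[of u v d] by auto
    with False uv du show ?thesis
      by (auto simp: x mem_cross_branch_pairs_iff)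
  next
    case True
    then have "depth d u = Suc k" "depth d v = Suc k"
      using uv du tree_dist_same_branch[of u v d] by auto
    moreover have "ancestor d u 2 \<noteq> ancestor d v 2"
    proof
      assume "ancestor d u 2 = ancestor d v 2"
      then have "tree_dist d u v + 2 * 2 \<le> depth d u + depth d v"
        using uv assms calculation by (intro tree_dist_add_le_depth) auto
      with uv calculation show False by simp
    qed
    ultimately show ?thesis
      using True uv by (auto simp: x bottom_pairs_meeting_at_depth_1_def level_def)
  qed
qed

lemma card_pairs_at_2k_2: "card (pairs_at (2 * k + 2)) = 2 * (3 * d ^ k * d ^ k)"
  unfolding pairs_at_2k_2 using card_cross_branch_pairs_bottom by simp

lemma card_pairs_at_2k_1: "card (pairs_at (2 * k + 1)) = 2 * (3 * d ^ k * d ^ k)"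
proof -
  have "cross_branch_pairs (Suc k) k \<inter> cross_branch_pairs k (Suc k) = {}"
    by (auto simp: cross_branch_pairs_def level_def)
  then have "card (pairs_at (2 * k + 1)) =
      card (cross_branch_pairs (Suc k) k) + card (cross_branch_pairs k (Suc k))"
    unfolding pairs_at_2k_1 by (intro card_Un_disjoint finite_cross_branch_pairs)
  then show ?thesis
    using card_cross_branch_pairs_swap[of k "Suc k"] card_cross_branch_pairs_from_bottom[of k]
    by simp
qed

lemma pairs_at_0: "pairs_at 0 = {}"
proof (intro equals0I)
  fix x assume "x \<in> pairs_at 0"
  then obtain u v where "0 < u" "0 < v" "u \<noteq> v" "tree_dist d u v = 0"
    by (auto simp: pairs_at_def Suc_le_eq)
  then show False
    using tree_dist_pos[of u v d] by simp
qed

lemma card_pairs_at_2k_le_sum: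
  assumes "0 < k"
  shows "card (pairs_at (2 * k)) \<le> 2 * card (cross_branch_pairs (Suc k) (k - 1)) +
    card (cross_branch_pairs k k) + card bottom_pairs_meeting_at_depth_1"
proof -
  have "finite bottom_pairs_meeting_at_depth_1"
    by (simp add: bottom_pairs_meeting_at_depth_1_def finite_level)
  then have "card (pairs_at (2 * k)) \<le> card (cross_branch_pairs (Suc k) (k - 1) \<union>
      cross_branch_pairs (k - 1) (Suc k) \<union> cross_branch_pairs k k \<union> bottom_pairs_meeting_at_depth_1)"
    using assms by (intro card_mono pairs_at_2k_subset) (simp_all add: finite_cross_branch_pairs)
  also have "\<dots> \<le> card (cross_branch_pairs (Suc k) (k - 1)) +
      card (cross_branch_pairs (k - 1) (Suc k)) + card (cross_branch_pairs k k) +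
      card bottom_pairs_meeting_at_depth_1"
    by (meson add_le_mono card_Un_le le_trans order_refl)
  finally show ?thesis
    using card_cross_branch_pairs_swap[of "k - 1" "Suc k"] by simp
qed

lemma card_pairs_at_2k_le: "card (pairs_at (2 * k)) \<le> 2 * (3 * d ^ k * d ^ k)"
proof (cases "k = 0")
  case True
  then show ?thesis by (simp add: pairs_at_0)
next
  case False
  define a where "a = d ^ (k - 1)"
  have dk: "d ^ k = d * a" and size_k: "level_size d k = (d + 1) * a"
    using False by (simp_all add: a_def level_size_def power_eq_if)
  have "card (cross_branch_pairs (Suc k) (k - 1)) = 3 * (d * a) * a"
    using card_cross_branch_pairs_from_bottom[of "k - 1"] by (simp add: dk a_def)
  moreover have "card (cross_branch_pairs k k) = (d + 1) * a * (d * a)"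
    using card_cross_branch_pairs_upper[of k k] False by (simp add: dk size_k)
  moreover have "card bottom_pairs_meeting_at_depth_1 = 3 * (d * a) * (d * a - a)"
    using card_bottom_pairs_meeting_at_depth_1 False by (simp add: dk a_def)
  ultimately have "card (pairs_at (2 * k)) \<le>
      2 * (3 * (d * a) * a) + (d + 1) * a * (d * a) + 3 * (d * a) * (d * a - a)"
    using card_pairs_at_2k_le_sum False by simp
  also have "\<dots> \<le> 2 * (3 * (d * a) * (d * a))"
    using two_le_d by (rule distance_2k_count_bound)
  finally show ?thesis by (simp add: dk)
qed

end

theorem lemma3p2:
  fixes d k :: nat
  assumes "d \<ge> 2"
  defines "p \<equiv> m_k d k + 2 * d ^ k - 1"
  defines "W \<equiv> dendrimer_W p d"
  shows "coeff W (2 * k) \<le> coeff W (2 * k + 1) \<and> coeff W (2 * k + 1) = coeff W (2 * k + 2)"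
proof -
  interpret truncated_dendrimer d k p
    using assms(1) m_k_eq_level_offset[OF assms(1), of k] by unfold_locales (simp_all add: p_def)
  have "2 * coeff W r = int (card (pairs_at r))" for r
    unfolding W_def pairs_at_def using d_pos by (rule two_mult_coeff_dendrimer_W)
  then show ?thesis
    using card_pairs_at_2k_le card_pairs_at_2k_1 card_pairs_at_2k_2 by (smt (verit) of_nat_mono)
qed

end
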